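(* Let $\lambda=(\lambda_1,\ldots,\lambda_\ell)$ be a partition with $\ell$ positive parts, let $t$ be an integer with $0\leq t<\lambda_\ell$, and let $\mu=(\lambda_1-t,\ldots,\lambda_\ell-t)$ (the partition whose Young diagram is obtained by deleting the first $t$ columns of that of $\lambda$). Suppose $n\geq\ell$. Then the poset $\mathcal B_\mu^n$ is isomorphic to a principal order ideal in the poset $\mathcal B_\lambda^n$. In particular, if $\mathcal B_\mu^n$ is not a lattice, then $\mathcal B_\lambda^n$ is not a lattice.
   Context: For $N\geq 1$ and a partition $\nu$ with at most $N$ positive parts, $\mathcal B_\nu^N$ is the set of semistandard Young tableaux of shape $\nu$ (rows weakly increasing, columns strictly increasing) with entries in $\{1,\ldots,N+1\}$, partially ordered by the reflexive transitive closure of $T<F_i(T)$ for $i\in\{1,\ldots,N\}$ with $F_i(T)\neq 0$. Here $F_i$ is the type A crystal lowering operator: in the reading word of $T$ (rows read from bottom to top, each row left to right) keep only letters $i$ and $i+1$, replace each $i$ by ")" and each $i+1$ by "(", and match parentheses in the usual way; if there is no unmatched ")", $F_i(T)=0$; otherwise $F_i(T)$ is obtained by changing the entry $i$ corresponding to the rightmost unmatched ")" into $i+1$. *)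

theory Defs
  imports Main
begin

text \<open>Partitions are lists of positive parts, weakly decreasing (top row first).
Tableaux are lists of rows (top row first), each row a list of entries.\<close>

definition is_partition :: "nat list \<Rightarrow> bool" where
  "is_partition \<nu> \<longleftrightarrow> (\<forall>x\<in>set \<nu>. 0 < x) \<and> sorted_wrt (\<ge>) \<nu>"

definition ssyt :: "nat \<Rightarrow> nat list \<Rightarrow> nat list list \<Rightarrow> bool" where
  "ssyt N \<nu> T \<longleftrightarrow>
     map length T = \<nu> \<and>
     (\<forall>row\<in>set T. \<forall>x\<in>set row. 1 \<le> x \<and> x \<le> N + 1) \<and>
     (\<forall>row\<in>set T. sorted row) \<and>
     (\<forall>r c. Suc r < length T \<longrightarrow> c < length (T ! Suc r) \<longrightarrow> T ! r ! c < T ! Suc r ! c)"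

definition Btab :: "nat \<Rightarrow> nat list \<Rightarrow> nat list list set" where
  "Btab N \<nu> = {T. ssyt N \<nu> T}"

definition reading_word :: "nat list list \<Rightarrow> nat list" where
  "reading_word T = concat (rev T)"

text \<open>Position of the rightmost unmatched ``)'' (letter i), where letters i+1 are ``(''.
Scan left to right with c = number of currently open ``('' and r = last unmatched ``)'' seen.\<close>
fun rum :: "nat \<Rightarrow> nat list \<Rightarrow> nat \<Rightarrow> nat \<Rightarrow> nat option \<Rightarrow> nat option" where
  "rum i [] k c r = r"
| "rum i (x # xs) k c r =
     (if x = i + 1 then rum i xs (Suc k) (Suc c) r
      else if x = i then
        (if c = 0 then rum i xs (Suc k) 0 (Some k) else rum i xs (Suc k) (c - 1) r)
      else rum i xs (Suc k) c r)"

definition Fword :: "nat \<Rightarrow> nat list \<Rightarrow> nat list option" where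
  "Fword i w = (case rum i w 0 0 None of None \<Rightarrow> None | Some k \<Rightarrow> Some (w[k := i + 1]))"

fun split_lens :: "nat list \<Rightarrow> 'a list \<Rightarrow> 'a list list" where
  "split_lens [] w = []"
| "split_lens (l # ls) w = take l w # split_lens ls (drop l w)"

text \<open>Crystal lowering operator on tableaux; None represents 0.\<close>
definition Ftab :: "nat \<Rightarrow> nat list list \<Rightarrow> nat list list option" where
  "Ftab i T = map_option (\<lambda>w. rev (split_lens (rev (map length T)) w)) (Fword i (reading_word T))"

definition Bstep :: "nat \<Rightarrow> nat list \<Rightarrow> (nat list list \<times> nat list list) set" where
  "Bstep N \<nu> = {(T, T'). T \<in> Btab N \<nu> \<and> (\<exists>i\<in>{1..N}. Ftab i T = Some T')}"

definition Ble :: "nat \<Rightarrow> nat list \<Rightarrow> nat list list \<Rightarrow> nat list list \<Rightarrow> bool" where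
  "Ble N \<nu> S T \<longleftrightarrow> S \<in> Btab N \<nu> \<and> T \<in> Btab N \<nu> \<and> (S, T) \<in> (Bstep N \<nu>)\<^sup>*"

definition order_iso_onto :: "('a \<Rightarrow> 'b) \<Rightarrow> 'a set \<Rightarrow> ('a \<Rightarrow> 'a \<Rightarrow> bool) \<Rightarrow> 'b set \<Rightarrow> ('b \<Rightarrow> 'b \<Rightarrow> bool) \<Rightarrow> bool" where
  "order_iso_onto f A leA B leB \<longleftrightarrow> bij_betw f A B \<and> (\<forall>x\<in>A. \<forall>y\<in>A. leA x y \<longleftrightarrow> leB (f x) (f y))"

definition principal_ideal :: "'a set \<Rightarrow> ('a \<Rightarrow> 'a \<Rightarrow> bool) \<Rightarrow> 'a \<Rightarrow> 'a set" where
  "principal_ideal A le t = {s \<in> A. le s t}"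

definition is_lattice :: "'a set \<Rightarrow> ('a \<Rightarrow> 'a \<Rightarrow> bool) \<Rightarrow> bool" where
  "is_lattice A le \<longleftrightarrow> (\<forall>x\<in>A. \<forall>y\<in>A.
      (\<exists>z\<in>A. le x z \<and> le y z \<and> (\<forall>w\<in>A. le x w \<and> le y w \<longrightarrow> le z w)) \<and>
      (\<exists>z\<in>A. le z x \<and> le z y \<and> (\<forall>w\<in>A. le w x \<and> le w y \<longrightarrow> le w z)))"

end

theory Submission
  imports Defs
begin

text \<open>
  Prepending to a tableau of shape \<open>\<mu>\<close> with \<open>l\<close> rows the \<open>t\<close> columns filled with
  \<open>1, \<dots>, l\<close> embeds \<open>B\<^sub>\<mu>\<close> into \<open>B\<^sub>\<lambda>\<close>. In the reading word the new entries \<open>k + 1\<close> of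
  row \<open>k\<close> are matched by the new entries \<open>k\<close> of row \<open>k - 1\<close>, so the embedding commutes
  with every \<open>F\<^sub>i\<close>; only the new letters \<open>l\<close> of the bottom row stay unmatched, and
  \<open>F\<^sub>l\<close> acts on them exactly when it kills the old tableau, leaving the image. Conversely
  a tableau whose image under some \<open>F\<^sub>i\<close> is in the image lies in the image itself. So
  the embedding is an order isomorphism onto a down-set, and this down-set is the
  principal ideal generated by the image of the greatest element of \<open>B\<^sub>\<mu>\<close>: the
  tableau whose columns carry the largest admissible entries. Every tableau reaches it,
  because each \<open>F\<^sub>i\<close> raises the entry sum and it is the only tableau killed by all
  \<open>F\<^sub>i\<close>. Finally, a principal ideal of a lattice is a lattice.
\<close>

lemma count_list_eq_card: "count_list xs x = card {k. k < length xs \<and> xs ! k = x}"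
  by (simp add: count_list_eq_length_filter length_filter_conv_card eq_commute)

lemma count_list_concat: "count_list (concat xss) y = (\<Sum>xs\<leftarrow>xss. count_list xs y)"
  by (induction xss) auto

lemma count_list_map_upt: "count_list (map f [0..<n]) y = card {c. c < n \<and> f c = y}"
  by (auto simp: count_list_eq_card intro!: arg_cong[where f = card])

lemma count_list_replicate: "count_list (replicate t x) y = (if x = y then t else 0)"
  by (induction t) auto

lemma sum_list_le_length_mult: "\<forall>x\<in>set xs. x \<le> B \<Longrightarrow> sum_list xs \<le> B * length xs"
  for xs :: "nat list"
  by (induction xs) auto

lemma take_2_drop: "Suc a < length xs \<Longrightarrow> take 2 (drop a xs) = [xs ! a, xs ! Suc a]"
proof -
  assume "Suc a < length xs"
  then have "drop a xs = xs ! a # xs ! Suc a # drop (Suc (Suc a)) xs"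
    by (simp add: Cons_nth_drop_Suc)
  then show ?thesis
    by (simp add: numeral_2_eq_2)
qed

lemma split_lens_concat: "split_lens (map length rs) (concat rs) = rs"
  by (induction rs) auto

section \<open>Bracket matching\<close>

text \<open>Letters \<open>Suc i\<close> open and letters \<open>i\<close> close brackets; \<open>c\<close> counts the opening brackets
  read so far that are still unmatched.\<close>

fun open_after :: "nat \<Rightarrow> nat list \<Rightarrow> nat \<Rightarrow> nat" where
  "open_after i [] c = c"
| "open_after i (x # xs) c =
     open_after i xs (if x = Suc i then Suc c else if x = i then c - 1 else c)"

fun unmatched_pos :: "nat \<Rightarrow> nat list \<Rightarrow> nat \<Rightarrow> nat option" where
  "unmatched_pos i [] c = None"
| "unmatched_pos i (x # xs) c =
     (case unmatched_pos i xs (open_after i [x] c) of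
        Some j \<Rightarrow> Some (Suc j)
      | None \<Rightarrow> if x = i \<and> c = 0 then Some 0 else None)"

definition lower_word :: "nat \<Rightarrow> nat list \<Rightarrow> nat \<Rightarrow> nat list option" where
  "lower_word i w c = map_option (\<lambda>j. w[j := Suc i]) (unmatched_pos i w c)"

lemma rum_eq_unmatched_pos:
  "rum i w k c r = (case unmatched_pos i w c of Some j \<Rightarrow> Some (k + j) | None \<Rightarrow> r)"
  by (induction w arbitrary: k c r) (auto split: option.splits)

lemma Fword_eq_lower_word: "Fword i w = lower_word i w 0"
  by (simp add: Fword_def lower_word_def rum_eq_unmatched_pos split: option.splits)

lemma lower_word_Nil [simp]: "lower_word i [] c = None"
  by (simp add: lower_word_def)

lemma lower_word_Cons [simp]:
  "lower_word i (x # xs) c =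
     (case lower_word i xs (open_after i [x] c) of
        Some ys \<Rightarrow> Some (x # ys)
      | None \<Rightarrow> if x = i \<and> c = 0 then Some (Suc i # xs) else None)"
  by (simp add: lower_word_def split: option.splits)

lemma open_after_append: "open_after i (xs @ ys) c = open_after i ys (open_after i xs c)"
  by (induction xs arbitrary: c) auto

lemma lower_word_append:
  "lower_word i (xs @ ys) c =
     (case lower_word i ys (open_after i xs c) of
        Some zs \<Rightarrow> Some (xs @ zs)
      | None \<Rightarrow> map_option (\<lambda>us. us @ ys) (lower_word i xs c))"
  by (induction xs arbitrary: c) (auto split: option.splits)

lemma length_lower_word: "lower_word i w c = Some w' \<Longrightarrow> length w' = length w"
  by (auto simp: lower_word_def)

lemma lower_word_notin: "i \<notin> set w \<Longrightarrow> lower_word i w c = None"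
  by (induction w arbitrary: c) auto

lemma open_after_notin: "i \<notin> set w \<Longrightarrow> open_after i w c = c + count_list w (Suc i)"
  by (induction w arbitrary: c) auto

lemma open_after_neutral: "i \<notin> set w \<Longrightarrow> Suc i \<notin> set w \<Longrightarrow> open_after i w c = c"
  by (simp add: open_after_notin count_list_0_iff)

lemma lower_word_neutral_append:
  "i \<notin> set p \<Longrightarrow> Suc i \<notin> set p \<Longrightarrow> lower_word i (p @ w) c = map_option ((@) p) (lower_word i w c)"
  by (cases "lower_word i w c") (auto simp: lower_word_append open_after_neutral lower_word_notin)

lemma open_after_replicate: "open_after i (replicate t i) c = c - t"
  by (induction t arbitrary: c) auto

lemma lower_word_replicate:
  "lower_word i (replicate t i) c = (if c < t then Some (replicate (t - 1) i @ [Suc i]) else None)"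
proof (induction t arbitrary: c)
  case (Suc t)
  show ?case
    using Suc.IH[of "c - 1"] by (cases t) (auto split: if_splits)
qed simp

lemma open_after_ge: "c - count_list w i \<le> open_after i w c"
proof (induction w arbitrary: c)
  case (Cons x w)
  consider "x = Suc i" | "x = i" | "x \<noteq> i" "x \<noteq> Suc i" by blast
  then show ?case
  proof cases
    case 1
    then show ?thesis using Cons.IH[of "Suc c"] by simp
  next
    case 2
    then show ?thesis using Cons.IH[of "c - 1"] by simp
  next
    case 3
    then show ?thesis using Cons.IH[of c] by simp
  qed
qed simp

lemma lower_word_SomeD:
  "lower_word i w c = Some w' \<Longrightarrow>
     \<exists>p s. w = p @ i # s \<and> w' = p @ Suc i # s \<and> open_after i p c = 0 \<and> lower_word i s 0 = None"
proof (induction w arbitrary: c w')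
  case (Cons x xs)
  show ?case
  proof (cases "lower_word i xs (open_after i [x] c)")
    case (Some ys)
    with Cons obtain p s where "xs = p @ i # s" "ys = p @ Suc i # s"
      "open_after i p (open_after i [x] c) = 0" "lower_word i s 0 = None" by blast
    with Cons.prems Some show ?thesis
      by (intro exI[of _ "x # p"] exI[of _ s]) auto
  next
    case None
    with Cons.prems show ?thesis
      by (intro exI[of _ "[]"] exI[of _ xs]) (auto split: if_splits)
  qed
qed simp

lemma count_le_if_lower_word_None:
  "lower_word i (q @ rest) c = None \<Longrightarrow> count_list q i \<le> c + count_list q (Suc i)"
proof (induction q arbitrary: c)
  case (Cons x q)
  then have "lower_word i (q @ rest) (open_after i [x] c) = None" and "x = i \<longrightarrow> c \<noteq> 0"
    by (auto split: option.splits if_splits)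
  with Cons.IH[of "open_after i [x] c"] show ?case by (auto split: if_splits)
qed simp

lemma count_le_open_after_sorted: "sorted u \<Longrightarrow> count_list u (Suc i) \<le> open_after i u c"
proof (induction u arbitrary: c)
  case (Cons x u)
  show ?case
  proof (cases "x = Suc i")
    case True
    then have "i \<notin> set u" using Cons.prems by auto
    with True show ?thesis by (simp add: open_after_notin)
  qed (use Cons in auto)
qed simp

lemma notin_if_lower_word_None:
  assumes "lower_word i s 0 = None" "sorted (i # s)"
  shows "i \<notin> set s"
proof (cases s)
  case (Cons y ys)
  then have "y \<noteq> i"
    using assms(1) by (auto split: option.splits)
  with Cons assms(2) show ?thesis by auto
qed simp

section \<open>Lowering operators on tableaux\<close>

fun lower_rows :: "nat \<Rightarrow> nat list list \<Rightarrow> nat \<Rightarrow> nat list list option" where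
  "lower_rows i [] c = None"
| "lower_rows i (row # rows) c =
     (case lower_rows i rows (open_after i row c) of
        Some rs \<Rightarrow> Some (row # rs)
      | None \<Rightarrow> map_option (\<lambda>row'. row' # rows) (lower_word i row c))"

lemma lower_word_concat: "lower_word i (concat R) c = map_option concat (lower_rows i R c)"
  by (induction R arbitrary: c) (auto simp: lower_word_append option.map_comp o_def split: option.splits)

lemma lengths_lower_rows: "lower_rows i R c = Some R' \<Longrightarrow> map length R' = map length R"
  by (induction R arbitrary: c R') (auto split: option.splits dest: length_lower_word)

lemma length_lower_rows: "lower_rows i R c = Some R' \<Longrightarrow> length R' = length R"
  by (metis lengths_lower_rows length_map)

lemma lower_rows_append:
  "lower_rows i (A @ B) c =
     (case lower_rows i B (open_after i (concat A) c) of
        Some rs \<Rightarrow> Some (A @ rs)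
      | None \<Rightarrow> map_option (\<lambda>as. as @ B) (lower_rows i A c))"
  by (induction A arbitrary: c) (auto split: option.splits simp: open_after_append option.map_comp o_def)

lemma Ftab_eq_lower_rows: "Ftab i T = map_option rev (lower_rows i (rev T) 0)"
proof (cases "lower_rows i (rev T) 0")
  case (Some R')
  then have "rev (map length T) = map length R'"
    by (simp add: lengths_lower_rows rev_map)
  with Some show ?thesis
    by (simp add: Ftab_def Fword_eq_lower_word reading_word_def lower_word_concat split_lens_concat)
qed (simp add: Ftab_def Fword_eq_lower_word reading_word_def lower_word_concat)

lemma Ftab_eq_None_iff: "Ftab i T = None \<longleftrightarrow> lower_word i (reading_word T) 0 = None"
  by (simp add: Ftab_def Fword_eq_lower_word)

lemma lower_rows_SomeD:
  "lower_rows i R c = Some R' \<Longrightarrow>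
     \<exists>k p s. k < length R \<and> R ! k = p @ i # s \<and> R' = R[k := p @ Suc i # s] \<and>
       open_after i (concat (take k R) @ p) c = 0 \<and> lower_word i s 0 = None"
proof (induction R arbitrary: c R')
  case (Cons row rows)
  show ?case
  proof (cases "lower_rows i rows (open_after i row c)")
    case (Some rs)
    with Cons obtain k p s where "k < length rows" "rows ! k = p @ i # s" "rs = rows[k := p @ Suc i # s]"
      "open_after i (concat (take k rows) @ p) (open_after i row c) = 0" "lower_word i s 0 = None"
      by blast
    with Cons.prems Some show ?thesis
      by (intro exI[of _ "Suc k"] exI[of _ p] exI[of _ s]) (auto simp: open_after_append)
  next
    case None
    with Cons.prems obtain row' where "lower_word i row c = Some row'" "R' = row' # rows"
      by auto
    with lower_word_SomeD show ?thesis
      by (fastforce intro: exI[of _ 0])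
  qed
qed simp

lemma Ftab_SomeD:
  assumes "Ftab i T = Some T'"
  shows "\<exists>r p s. r < length T \<and> T ! r = p @ i # s \<and> T' = T[r := p @ Suc i # s] \<and>
           open_after i (reading_word (drop (Suc r) T) @ p) 0 = 0 \<and> lower_word i s 0 = None"
proof -
  obtain R' where R': "lower_rows i (rev T) 0 = Some R'" "T' = rev R'"
    using assms by (auto simp: Ftab_eq_lower_rows)
  from lower_rows_SomeD[OF R'(1)] obtain k p s where k: "k < length T" "rev T ! k = p @ i # s"
    "R' = (rev T)[k := p @ Suc i # s]" "open_after i (concat (take k (rev T)) @ p) 0 = 0"
    "lower_word i s 0 = None"
    by auto
  define r where "r = length T - Suc k"
  have "k = length T - Suc r" "r < length T"
    using k(1) by (auto simp: r_def)
  with k R'(2) show ?thesis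
    by (intro exI[of _ r] exI[of _ p] exI[of _ s])
      (auto simp: rev_nth rev_update take_rev reading_word_def)
qed

lemma length_Ftab: "Ftab i T = Some T' \<Longrightarrow> length T' = length T"
  by (auto dest: Ftab_SomeD)

lemma reading_word_drop:
  "Suc r < length S \<Longrightarrow> reading_word (drop (Suc r) S) = reading_word (drop (Suc (Suc r)) S) @ S ! Suc r"
  by (simp add: reading_word_def Cons_nth_drop_Suc[symmetric])

lemma count_list_reading_word: "count_list (reading_word S) y = count_list (concat S) y"
  by (simp add: reading_word_def count_list_concat flip: rev_map)

section \<open>Partitions and semistandard tableaux\<close>

lemma partition_antimono: "is_partition \<nu> \<Longrightarrow> r \<le> r' \<Longrightarrow> r' < length \<nu> \<Longrightarrow> \<nu> ! r' \<le> \<nu> ! r"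
  unfolding is_partition_def by (metis le_neq_implies_less order_refl sorted_wrt_nth_less)

lemma partition_ConsD: "is_partition (k # \<nu>) \<Longrightarrow> is_partition \<nu> \<and> (\<forall>l\<in>set \<nu>. l \<le> k)"
  unfolding is_partition_def by auto

lemma partition_last_le:
  assumes "is_partition \<nu>" "x \<in> set \<nu>"
  shows "last \<nu> \<le> x"
proof -
  obtain k where "k < length \<nu>" "x = \<nu> ! k"
    using assms(2) by (auto simp: in_set_conv_nth)
  moreover from this have "last \<nu> = \<nu> ! (length \<nu> - 1)"
    by (intro last_conv_nth) auto
  ultimately show ?thesis
    using partition_antimono[OF assms(1), of k "length \<nu> - 1"] by simp
qed

lemma partition_map_minus:
  "is_partition \<nu> \<Longrightarrow> \<forall>x\<in>set \<nu>. t < x \<Longrightarrow> is_partition (map (\<lambda>x. x - t) \<nu>)"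
  unfolding is_partition_def sorted_wrt_map by (auto elim!: sorted_wrt_mono_rel[rotated])

lemma length_ssyt: "ssyt N \<nu> S \<Longrightarrow> length S = length \<nu>"
  unfolding ssyt_def by (metis length_map)

lemma length_row_ssyt: "ssyt N \<nu> S \<Longrightarrow> r < length S \<Longrightarrow> length (S ! r) = \<nu> ! r"
  unfolding ssyt_def by (metis nth_map)

lemma ssyt_ConsD: "ssyt N (k # \<nu>) (row # S) \<Longrightarrow> ssyt N \<nu> S"
  unfolding ssyt_def
proof (elim conjE, intro conjI allI impI)
  fix r c
  assume "\<forall>r c. Suc r < length (row # S) \<longrightarrow> c < length ((row # S) ! Suc r) \<longrightarrow>
            (row # S) ! r ! c < (row # S) ! Suc r ! c"
    and "Suc r < length S" "c < length (S ! Suc r)"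
  then show "S ! r ! c < S ! Suc r ! c"
    by (metis Suc_less_eq length_Cons nth_Cons_Suc)
qed auto

lemma ssyt_entry_ge:
  assumes "is_partition \<nu>" "ssyt N \<nu> S"
  shows "r < length S \<Longrightarrow> c < length (S ! r) \<Longrightarrow> Suc r \<le> S ! r ! c"
proof (induction r arbitrary: c)
  case 0
  then show ?case using assms(2) unfolding ssyt_def by (metis Suc_eq_plus1 add_0 nth_mem)
next
  case (Suc r)
  then have "c < length (S ! r)"
    using assms partition_antimono[of \<nu> r "Suc r"] by (simp add: length_ssyt length_row_ssyt)
  with Suc have "Suc r \<le> S ! r ! c" by simp
  moreover have "S ! r ! c < S ! Suc r ! c"
    using Suc.prems assms(2) unfolding ssyt_def by blast
  ultimately show ?case by simp
qed

lemma notin_row_ssyt: "is_partition \<nu> \<Longrightarrow> ssyt N \<nu> T \<Longrightarrow> r < length T \<Longrightarrow> r \<notin> set (T ! r)"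
  by (metis in_set_conv_nth not_less_eq_eq order_refl ssyt_entry_ge)

lemma ssyt_raise_entry:
  assumes S: "ssyt N \<nu> S" and r: "r < length S" and row: "S ! r = p @ i # s" and "i \<le> N"
    and sorted: "sorted (p @ Suc i # s)"
    and below: "Suc r < length S \<Longrightarrow> length p < length (S ! Suc r) \<Longrightarrow> Suc i < S ! Suc r ! length p"
  shows "ssyt N \<nu> (S[r := p @ Suc i # s])"
proof -
  let ?S' = "S[r := p @ Suc i # s]"
  have rows: "set ?S' \<subseteq> insert (p @ Suc i # s) (set S)"
    by (rule set_update_subset_insert)
  have same: "?S' ! k ! c = S ! k ! c" if "k \<noteq> r \<or> c \<noteq> length p" for k c
    using that r row by (cases "k = r") (auto simp: nth_append nth_Cons split: nat.splits)
  have lengths: "length (?S' ! k) = length (S ! k)" for k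
    using r row by (cases "k = r") auto
  have col: "?S' ! k ! c < ?S' ! Suc k ! c" if k: "Suc k < length S" "c < length (S ! Suc k)" for k c
  proof (cases "k = r \<and> c = length p")
    case True
    with below k row show ?thesis by simp
  next
    case False
    then have "?S' ! k ! c = S ! k ! c" by (simp add: same)
    moreover have "S ! k ! c < S ! Suc k ! c"
      using S k unfolding ssyt_def by blast
    moreover have "S ! Suc k ! c \<le> ?S' ! Suc k ! c"
      using r row by (cases "Suc k = r \<and> c = length p") (simp_all add: same)
    ultimately show ?thesis by simp
  qed
  have "map length ?S' = \<nu>"
    using S r row unfolding ssyt_def by (metis length_append length_Cons list_update_id map_update)
  moreover have "\<forall>row\<in>set ?S'. \<forall>x\<in>set row. 1 \<le> x \<and> x \<le> N + 1"
  proof -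
    have "p @ i # s \<in> set S"
      using r row by (metis nth_mem)
    with S \<open>i \<le> N\<close> have "\<forall>x\<in>set (p @ Suc i # s). 1 \<le> x \<and> x \<le> N + 1"
      unfolding ssyt_def by fastforce
    with S rows show ?thesis
      unfolding ssyt_def by blast
  qed
  moreover have "\<forall>row\<in>set ?S'. sorted row"
    using S rows sorted unfolding ssyt_def by blast
  ultimately show ?thesis
    using col lengths unfolding ssyt_def by simp
qed

lemma sorted_raise: "sorted (p @ i # s) \<Longrightarrow> i \<notin> set s \<Longrightarrow> sorted (p @ Suc i # s)"
  by (fastforce simp: sorted_append Suc_le_eq order_le_less)

lemma count_lt_count_row_below:
  assumes "sorted u" "length p < length u" "\<forall>x\<in>set p. x \<le> i"
    and "\<forall>k<length p. p ! k < u ! k" "u ! length p = Suc i"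
  shows "count_list p i < count_list u (Suc i)"
proof -
  let ?U = "{k. k < length u \<and> u ! k = Suc i}"
  have "{k. k < length p \<and> p ! k = i} \<subseteq> ?U - {length p}"
  proof
    fix k assume k: "k \<in> {k. k < length p \<and> p ! k = i}"
    then have "i < u ! k"
      using assms(4) by auto
    moreover have "u ! k \<le> u ! length p"
      using assms(1,2) k by (simp add: sorted_nth_mono)
    ultimately show "k \<in> ?U - {length p}"
      using k assms(2,5) by auto
  qed
  then have "count_list p i \<le> card (?U - {length p})"
    unfolding count_list_eq_card by (intro card_mono) auto
  also have "\<dots> < card ?U"
    using assms(2,5) by (intro psubset_card_mono) auto
  finally show ?thesis
    by (simp add: count_list_eq_card)
qed

lemma ssyt_Ftab:
  assumes S: "ssyt N \<nu> S" and "i \<le> N" and F: "Ftab i S = Some S'"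
  shows "ssyt N \<nu> S'"
proof -
  obtain r p s where r: "r < length S" and row: "S ! r = p @ i # s" and S': "S' = S[r := p @ Suc i # s]"
    and closed: "open_after i (reading_word (drop (Suc r) S) @ p) 0 = 0"
    and tail: "lower_word i s 0 = None"
    using Ftab_SomeD[OF F] by blast
  have sorted_row: "sorted (p @ i # s)"
    using S r row unfolding ssyt_def by (metis nth_mem)
  have below: "Suc i < S ! Suc r ! length p" if Sr: "Suc r < length S" "length p < length (S ! Suc r)"
  proof -
    let ?u = "S ! Suc r" and ?c = "open_after i (reading_word (drop (Suc (Suc r)) S)) 0"
    have col: "S ! r ! k < ?u ! k" if "k < length ?u" for k
      using S Sr that unfolding ssyt_def by blast
    then have "i < ?u ! length p"
      using row Sr by (metis nth_append_length)
    \<comment> \<open>every letter \<open>i\<close> of \<open>p\<close> sits above a letter \<open>Suc i\<close>, so a further \<open>Suc i\<close>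
        below the raised letter would remain unmatched\<close>
    moreover have "?u ! length p \<noteq> Suc i"
    proof
      assume "?u ! length p = Suc i"
      moreover have "sorted ?u"
        using S Sr unfolding ssyt_def by (metis nth_mem)
      moreover have "p ! k < ?u ! k" if "k < length p" for k
        using col[of k] row Sr that by (simp add: nth_append)
      ultimately have "count_list p i < count_list ?u (Suc i)"
        using Sr sorted_row by (intro count_lt_count_row_below) (auto simp: sorted_append)
      also have "\<dots> \<le> open_after i ?u ?c"
        using \<open>sorted ?u\<close> by (rule count_le_open_after_sorted)
      finally show False
        using closed open_after_ge[of "open_after i ?u ?c" p i] Sr(1)
        by (simp add: reading_word_drop open_after_append)
    qed
    ultimately show ?thesis by simp
  qed
  have "i \<notin> set s"
    using tail sorted_row by (intro notin_if_lower_word_None) (simp_all add: sorted_append)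
  with sorted_row show ?thesis
    unfolding S' by (intro ssyt_raise_entry[OF S r row \<open>i \<le> N\<close> _ below] sorted_raise)
qed

section \<open>The greatest tableau\<close>

definition entry_sum :: "nat list list \<Rightarrow> nat" where
  "entry_sum S = sum_list (map sum_list S)"

lemma entry_sum_Ftab: "Ftab i S = Some S' \<Longrightarrow> entry_sum S' = Suc (entry_sum S)"
  by (auto simp: entry_sum_def map_update sum_list_update dest!: Ftab_SomeD)

lemma entry_sum_le:
  assumes "ssyt N \<nu> S"
  shows "entry_sum S \<le> (N + 1) * sum_list \<nu>"
proof -
  have "entry_sum S \<le> (\<Sum>row\<leftarrow>S. (N + 1) * length row)"
    unfolding entry_sum_def using assms
    by (intro sum_list_mono sum_list_le_length_mult) (auto simp: ssyt_def)
  also have "\<dots> = (N + 1) * sum_list (map length S)"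
    by (rule sum_list_const_mult)
  finally show ?thesis
    using assms by (simp add: ssyt_def)
qed

definition col_height :: "nat list \<Rightarrow> nat \<Rightarrow> nat" where
  "col_height \<nu> c = length (filter (\<lambda>l. c < l) \<nu>)"

text \<open>Every column of height \<open>h\<close> is filled with \<open>N + 2 - h, \<dots>, N + 1\<close>.\<close>

definition lowest_tableau :: "nat \<Rightarrow> nat list \<Rightarrow> nat list list" where
  "lowest_tableau N \<nu> = map (\<lambda>r. map (\<lambda>c. N + 2 + r - col_height \<nu> c) [0..<\<nu> ! r]) [0..<length \<nu>]"

lemma col_height_Nil [simp]: "col_height [] c = 0"
  by (simp add: col_height_def)

lemma col_height_Cons: "col_height (k # \<nu>) c = (if c < k then 1 else 0) + col_height \<nu> c"
  by (simp add: col_height_def)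

lemma col_height_le_length: "col_height \<nu> c \<le> length \<nu>"
  by (simp add: col_height_def)

lemma col_height_antimono: "c \<le> c' \<Longrightarrow> col_height \<nu> c' \<le> col_height \<nu> c"
  unfolding col_height_def by (induction \<nu>) auto

lemma Suc_le_col_height_iff:
  "is_partition \<nu> \<Longrightarrow> Suc r \<le> col_height \<nu> c \<longleftrightarrow> r < length \<nu> \<and> c < \<nu> ! r"
proof (induction \<nu> arbitrary: r)
  case (Cons k \<nu>)
  then have \<nu>: "is_partition \<nu>" "\<forall>l\<in>set \<nu>. l \<le> k"
    using partition_ConsD by auto
  show ?case
  proof (cases "c < k")
    case True
    then show ?thesis using Cons.IH[OF \<nu>(1)] by (cases r) (auto simp: col_height_Cons)
  next
    case False
    with \<nu>(2) have "col_height \<nu> c = 0"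
      by (auto simp: col_height_def filter_empty_conv)
    moreover have "(k # \<nu>) ! r \<le> c" if "r < length (k # \<nu>)" for r
      using that \<nu>(2) False nth_mem[of _ \<nu>] by (cases r) fastforce+
    ultimately show ?thesis
      using False by (fastforce simp: col_height_Cons not_less)
  qed
qed simp

lemma lt_head_if_col_height_pos: "is_partition (k # \<nu>) \<Longrightarrow> 0 < col_height (k # \<nu>) c \<Longrightarrow> c < k"
  using Suc_le_col_height_iff[of "k # \<nu>" 0 c] by simp

lemma lowest_tableau_Nil [simp]: "lowest_tableau N [] = []"
  by (simp add: lowest_tableau_def)

lemma lowest_tableau_Cons:
  assumes "is_partition (k # \<nu>)"
  shows "lowest_tableau N (k # \<nu>) = map (\<lambda>c. N + 2 - col_height (k # \<nu>) c) [0..<k] # lowest_tableau N \<nu>"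
proof -
  have "N + 2 + Suc r - col_height (k # \<nu>) c = N + 2 + r - col_height \<nu> c"
    if "r < length \<nu>" "c < \<nu> ! r" for r c
  proof -
    have "c < k"
      using partition_ConsD[OF assms] that nth_mem by fastforce
    then show ?thesis by (simp add: col_height_Cons)
  qed
  moreover have "[0..<length (k # \<nu>)] = 0 # map Suc [0..<length \<nu>]"
    by (simp add: upt_conv_Cons map_Suc_upt del: upt_Suc)
  ultimately show ?thesis
    unfolding lowest_tableau_def by simp
qed

lemma ssyt_lowest_tableau:
  assumes \<nu>: "is_partition \<nu>" and len: "length \<nu> \<le> N"
  shows "ssyt N \<nu> (lowest_tableau N \<nu>)"
  unfolding ssyt_def
proof (intro conjI ballI allI impI)
  show "map length (lowest_tableau N \<nu>) = \<nu>"
    unfolding lowest_tableau_def by (intro nth_equalityI) auto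
  have height: "col_height \<nu> c \<le> N" for c
    using col_height_le_length[of \<nu> c] len by simp
  fix row assume "row \<in> set (lowest_tableau N \<nu>)"
  then obtain r where r: "r < length \<nu>" "row = map (\<lambda>c. N + 2 + r - col_height \<nu> c) [0..<\<nu> ! r]"
    unfolding lowest_tableau_def by auto
  show "sorted row"
    unfolding r(2) sorted_iff_nth_mono by (auto intro!: diff_le_mono2 col_height_antimono)
  fix x assume "x \<in> set row"
  then obtain c where c: "c < \<nu> ! r" "x = N + 2 + r - col_height \<nu> c"
    using r by auto
  then have "Suc r \<le> col_height \<nu> c"
    using Suc_le_col_height_iff[OF \<nu>] r by simp
  with c height[of c] show "1 \<le> x" "x \<le> N + 1" by arith+
next
  fix r c
  assume "Suc r < length (lowest_tableau N \<nu>)" "c < length (lowest_tableau N \<nu> ! Suc r)"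
  then have rc: "Suc r < length \<nu>" "c < \<nu> ! Suc r"
    unfolding lowest_tableau_def by auto
  moreover have "c < \<nu> ! r"
    using rc partition_antimono[OF \<nu>, of r "Suc r"] by simp
  moreover have "Suc (Suc r) \<le> col_height \<nu> c" "col_height \<nu> c \<le> N"
    using Suc_le_col_height_iff[OF \<nu>] rc col_height_le_length[of \<nu> c] len by auto
  ultimately show "lowest_tableau N \<nu> ! r ! c < lowest_tableau N \<nu> ! Suc r ! c"
    unfolding lowest_tableau_def by simp
qed

lemma lowest_tableau_count:
  assumes "is_partition \<kappa>" "1 \<le> y" "y \<le> N"
  shows "count_list (concat (lowest_tableau N \<kappa>)) (Suc y)
           = count_list (concat (lowest_tableau N \<kappa>)) y + card {c. col_height \<kappa> c = N + 1 - y}"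
  using assms(1)
proof (induction \<kappa>)
  case (Cons k \<kappa>)
  let ?h = "col_height (k # \<kappa>)"
  have "is_partition \<kappa>"
    using partition_ConsD[OF Cons.prems] by simp
  have below_k: "c < k" if "0 < ?h c" for c
    using that by (rule lt_head_if_col_height_pos[OF Cons.prems])
  have below_k': "c < k" if "0 < col_height \<kappa> c" for c
    using that below_k[of c] by (simp add: col_height_Cons)
  have "{c. c < k \<and> N + 2 - ?h c = Suc y} = {c. ?h c = N + 1 - y}"
    using below_k assms(2,3) by auto
  moreover have "{c. c < k \<and> N + 2 - ?h c = y} = {c. col_height \<kappa> c = N + 1 - y}"
    using below_k' assms(2,3) by (auto simp: col_height_Cons)
  ultimately show ?case
    using Cons.IH[OF \<open>is_partition \<kappa>\<close>]
    by (simp add: lowest_tableau_Cons[OF Cons.prems] count_list_map_upt)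
qed simp

definition prefix_dominated :: "nat \<Rightarrow> nat list \<Rightarrow> bool" where
  "prefix_dominated N w \<longleftrightarrow>
     (\<forall>i\<in>{1..N}. \<forall>q rest. w = q @ rest \<longrightarrow> count_list q i \<le> count_list q (Suc i))"

lemma prefix_dominatedD:
  "prefix_dominated N (q @ rest) \<Longrightarrow> i \<in> {1..N} \<Longrightarrow> count_list q i \<le> count_list q (Suc i)"
  unfolding prefix_dominated_def by blast

lemma prefix_dominated_appendD: "prefix_dominated N (v @ w) \<Longrightarrow> prefix_dominated N v"
  unfolding prefix_dominated_def by (metis append.assoc)

lemma prefix_dominated_if_Ftab_None:
  "\<forall>i\<in>{1..N}. Ftab i S = None \<Longrightarrow> prefix_dominated N (reading_word S)"
  unfolding prefix_dominated_def Ftab_eq_None_iff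
  by (metis add_0 count_le_if_lower_word_None)

lemma lowest_first_row_entry_le:
  assumes S: "ssyt N (k # \<nu>) (row # lowest_tableau N \<nu>)" and \<nu>: "is_partition (k # \<nu>)"
    and c: "c < k"
  shows "row ! c \<le> N + 2 - col_height (k # \<nu>) c"
proof (cases "col_height \<nu> c = 0")
  case True
  have "row ! c \<in> set row" "row \<in> set (row # lowest_tableau N \<nu>)"
    using S c by (auto simp: ssyt_def)
  with S True c show ?thesis
    unfolding ssyt_def by (fastforce simp: col_height_Cons)
next
  case False
  then have "0 < length \<nu>" "c < \<nu> ! 0"
    using Suc_le_col_height_iff[of \<nu> 0 c] partition_ConsD[OF \<nu>] by auto
  moreover from this have "(row # lowest_tableau N \<nu>) ! 0 ! c < (row # lowest_tableau N \<nu>) ! Suc 0 ! c"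
    using S unfolding ssyt_def by (intro S[unfolded ssyt_def, THEN conjunct2, THEN conjunct2,
        THEN conjunct2, rule_format]) (simp_all add: lowest_tableau_def)
  ultimately show ?thesis
    using c by (simp add: col_height_Cons lowest_tableau_def)
qed

lemma col_height_tail_subset:
  assumes \<nu>: "is_partition (k # \<nu>)" and i: "1 \<le> i" "i \<le> N"
    and lt: "i < N + 2 - col_height (k # \<nu>) c"
  shows "{c'. col_height \<nu> c' = N + 1 - i} \<subseteq> {c'. c' < c \<and> N + 2 - col_height (k # \<nu>) c' = i}"
proof
  let ?h = "col_height (k # \<nu>)"
  fix c' assume c': "c' \<in> {c'. col_height \<nu> c' = N + 1 - i}"
  with i have "c' < k"
    using lt_head_if_col_height_pos[OF \<nu>, of c'] by (simp add: col_height_Cons)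
  with c' i have "?h c' = N + 2 - i"
    by (simp add: col_height_Cons)
  moreover have "c' < c"
  proof (rule ccontr)
    assume "\<not> c' < c"
    then have "?h c' \<le> ?h c"
      by (simp add: col_height_antimono)
    with lt \<open>?h c' = N + 2 - i\<close> show False by simp
  qed
  ultimately show "c' \<in> {c'. c' < c \<and> N + 2 - ?h c' = i}"
    using i by simp
qed

lemma lowest_first_row_entry_ge:
  assumes S: "ssyt N (k # \<nu>) (row # lowest_tableau N \<nu>)" and \<nu>: "is_partition (k # \<nu>)"
    and dom: "prefix_dominated N (reading_word (row # lowest_tableau N \<nu>))"
    and c: "c < k" and prev: "take c row = map (\<lambda>c'. N + 2 - col_height (k # \<nu>) c') [0..<c]"
  shows "N + 2 - col_height (k # \<nu>) c \<le> row ! c"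
  \<comment> \<open>a smaller entry would close more brackets than the rows below can open\<close>
proof (rule ccontr)
  let ?h = "col_height (k # \<nu>)" and ?W = "reading_word (lowest_tableau N \<nu>)"
  define i where "i = row ! c"
  assume "\<not> N + 2 - ?h c \<le> row ! c"
  then have lt: "i < N + 2 - ?h c" by (simp add: i_def)
  have row: "length row = k" "sorted row" "\<forall>x\<in>set row. 1 \<le> x"
    using S by (auto simp: ssyt_def)
  then have i: "1 \<le> i" "i \<le> N"
    using lt c by (auto simp: i_def col_height_Cons)
  have "reading_word (row # lowest_tableau N \<nu>) = (?W @ take c row @ [i]) @ drop (Suc c) row"
    using c row(1) by (simp add: reading_word_def i_def id_take_nth_drop[symmetric])
  then have "count_list (?W @ take c row @ [i]) i \<le> count_list (?W @ take c row @ [i]) (Suc i)"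
    using dom i by (intro prefix_dominatedD) simp_all
  moreover have "Suc i \<notin> set (take c row)"
  proof -
    have "sorted (take c row @ i # drop (Suc c) row)"
      using row c by (simp add: i_def id_take_nth_drop[symmetric])
    then show ?thesis
      by (auto simp: sorted_append)
  qed
  moreover have "count_list ?W (Suc i) = count_list ?W i + card {c'. col_height \<nu> c' = N + 1 - i}"
    using lowest_tableau_count[OF conjunct1[OF partition_ConsD[OF \<nu>]] i]
    by (simp add: count_list_reading_word)
  moreover have "card {c'. col_height \<nu> c' = N + 1 - i} \<le> count_list (take c row) i"
    unfolding prev count_list_map_upt
    using col_height_tail_subset[OF \<nu> i lt] by (rule card_mono[rotated]) simp
  ultimately show False by simp
qed

lemma lowest_first_row:
  assumes S: "ssyt N (k # \<nu>) (row # lowest_tableau N \<nu>)" and \<nu>: "is_partition (k # \<nu>)"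
    and dom: "prefix_dominated N (reading_word (row # lowest_tableau N \<nu>))"
  shows "row = map (\<lambda>c. N + 2 - col_height (k # \<nu>) c) [0..<k]"
proof -
  let ?row = "map (\<lambda>c. N + 2 - col_height (k # \<nu>) c) [0..<k]"
  have len: "length row = k"
    using S by (simp add: ssyt_def)
  have "take c row = take c ?row" if "c \<le> k" for c
    using that
  proof (induction c)
    case (Suc c)
    then have "take c row = map (\<lambda>c'. N + 2 - col_height (k # \<nu>) c') [0..<c]"
      by (simp add: take_map)
    then have "row ! c = ?row ! c"
      using Suc.prems lowest_first_row_entry_le[OF S \<nu>] lowest_first_row_entry_ge[OF S \<nu> dom]
      by (simp add: le_antisym)
    with Suc len show ?case
      by (simp add: take_Suc_conv_app_nth)
  qed simp
  from this[of k] len show ?thesis by simp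
qed

lemma lowest_tableau_unique:
  "ssyt N \<nu> S \<Longrightarrow> is_partition \<nu> \<Longrightarrow> prefix_dominated N (reading_word S) \<Longrightarrow> S = lowest_tableau N \<nu>"
proof (induction S arbitrary: \<nu>)
  case Nil
  then show ?case by (simp add: ssyt_def)
next
  case (Cons row S)
  then obtain k \<nu>' where \<nu>: "\<nu> = k # \<nu>'"
    by (cases \<nu>) (auto simp: ssyt_def)
  have "reading_word (row # S) = reading_word S @ row"
    by (simp add: reading_word_def)
  with Cons.prems have "S = lowest_tableau N \<nu>'"
    unfolding \<nu> by (intro Cons.IH) (auto dest: ssyt_ConsD partition_ConsD prefix_dominated_appendD)
  moreover from calculation Cons.prems
  have "row = map (\<lambda>c. N + 2 - col_height (k # \<nu>') c) [0..<k]"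
    unfolding \<nu> by (intro lowest_first_row) simp_all
  ultimately show ?case
    using Cons.prems(2) unfolding \<nu> by (simp add: lowest_tableau_Cons)
qed

lemma Ble_lowest_tableau:
  assumes \<nu>: "is_partition \<nu>" and "length \<nu> \<le> N"
  shows "S \<in> Btab N \<nu> \<Longrightarrow> Ble N \<nu> S (lowest_tableau N \<nu>)"
proof (induction "(N + 1) * sum_list \<nu> - entry_sum S" arbitrary: S rule: less_induct)
  case less
  then have S: "ssyt N \<nu> S"
    by (simp add: Btab_def)
  show ?case
  proof (cases "\<forall>i\<in>{1..N}. Ftab i S = None")
    case True
    then have "S = lowest_tableau N \<nu>"
      using S \<nu> by (intro lowest_tableau_unique prefix_dominated_if_Ftab_None)
    then show ?thesis
      using less.prems by (simp add: Ble_def)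
  next
    case False
    then obtain i S' where i: "i \<in> {1..N}" "Ftab i S = Some S'"
      by auto
    then have S': "ssyt N \<nu> S'"
      using ssyt_Ftab[OF S _ i(2)] by simp
    then have "(N + 1) * sum_list \<nu> - entry_sum S' < (N + 1) * sum_list \<nu> - entry_sum S"
      using entry_sum_Ftab[OF i(2)] entry_sum_le[OF S'] by simp
    with S' have "Ble N \<nu> S' (lowest_tableau N \<nu>)"
      by (intro less.hyps) (simp_all add: Btab_def)
    moreover have "(S, S') \<in> Bstep N \<nu>"
      using less.prems i by (auto simp: Bstep_def)
    ultimately show ?thesis
      using less.prems by (auto simp: Ble_def intro: converse_rtrancl_into_rtrancl)
  qed
qed

section \<open>Adding columns\<close>

definition append_rows :: "'a list list \<Rightarrow> 'a list list \<Rightarrow> 'a list list" where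
  "append_rows P R = map (\<lambda>(p, r). p @ r) (zip P R)"

lemma append_rows_Nil [simp]: "append_rows [] R = []" "append_rows P [] = []"
  by (simp_all add: append_rows_def)

lemma append_rows_Cons [simp]: "append_rows (p # P) (r # R) = (p @ r) # append_rows P R"
  by (simp add: append_rows_def)

lemma length_append_rows [simp]: "length (append_rows P R) = min (length P) (length R)"
  by (simp add: append_rows_def)

lemma nth_append_rows: "k < length P \<Longrightarrow> k < length R \<Longrightarrow> append_rows P R ! k = P ! k @ R ! k"
  by (simp add: append_rows_def)

lemma append_rows_append:
  "length P1 = length R1 \<Longrightarrow> append_rows (P1 @ P2) (R1 @ R2) = append_rows P1 R1 @ append_rows P2 R2"
  by (simp add: append_rows_def)

lemma rev_append_rows: "length P = length R \<Longrightarrow> rev (append_rows P R) = append_rows (rev P) (rev R)"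
  by (simp add: append_rows_def zip_rev rev_map)

definition transparent :: "nat \<Rightarrow> nat list list \<Rightarrow> nat list list \<Rightarrow> bool" where
  "transparent i P R \<longleftrightarrow> length P = length R \<and>
     (\<forall>c. lower_rows i (append_rows P R) c = map_option (append_rows P) (lower_rows i R c) \<and>
          open_after i (concat (append_rows P R)) c = open_after i (concat R) c)"

lemma transparent_append:
  assumes P1: "transparent i P1 R1" and P2: "transparent i P2 R2"
  shows "transparent i (P1 @ P2) (R1 @ R2)"
  unfolding transparent_def
proof (intro conjI allI)
  show "length (P1 @ P2) = length (R1 @ R2)"
    using assms by (simp add: transparent_def)
  have rows: "append_rows (P1 @ P2) (R1 @ R2) = append_rows P1 R1 @ append_rows P2 R2"
    using P1 by (simp add: transparent_def append_rows_append)
  fix c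
  show "open_after i (concat (append_rows (P1 @ P2) (R1 @ R2))) c = open_after i (concat (R1 @ R2)) c"
    using assms by (simp add: rows transparent_def open_after_append)
  show "lower_rows i (append_rows (P1 @ P2) (R1 @ R2)) c =
          map_option (append_rows (P1 @ P2)) (lower_rows i (R1 @ R2) c)"
    using assms length_lower_rows unfolding rows lower_rows_append
    by (cases "lower_rows i R1 c")
      (auto simp: transparent_def append_rows_append option.map_comp o_def split: option.splits)
qed

lemma transparent_neutral:
  "\<forall>p\<in>set P. i \<notin> set p \<and> Suc i \<notin> set p \<Longrightarrow> length P = length R \<Longrightarrow> transparent i P R"
proof (induction R arbitrary: P)
  case Nil
  then show ?case by (simp add: transparent_def)
next
  case (Cons r R)
  then obtain p P' where P: "P = p # P'" "transparent i P' R" "i \<notin> set p" "Suc i \<notin> set p"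
    by (cases P) auto
  then show ?case
    by (auto simp: transparent_def open_after_append open_after_neutral lower_word_neutral_append
        option.map_comp o_def split: option.splits)
qed

lemma transparent_matched_pair:
  assumes "i \<notin> set u"
  shows "transparent i [replicate t (Suc i), replicate t i] [u, v]"
proof -
  have "open_after i (replicate t (Suc i) @ u) c = open_after i u c + t" for c
    using assms by (simp add: open_after_notin count_list_replicate)
  moreover have "lower_word i (replicate t (Suc i) @ u) c = None" for c
    using assms by (simp add: lower_word_notin)
  ultimately show ?thesis
    using assms by (auto simp: transparent_def open_after_append open_after_replicate lower_word_append
        lower_word_replicate lower_word_notin split: option.splits)
qed

lemma transparent_take_drop:
  assumes "transparent i (take a P) (take a R)" "transparent i (take 2 (drop a P)) (take 2 (drop a R))"
    "transparent i (drop (a + 2) P) (drop (a + 2) R)"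
  shows "transparent i P R"
proof -
  have "xs = take a xs @ take 2 (drop a xs) @ drop (a + 2) xs" for xs :: "nat list list"
    by (metis append_take_drop_id add.commute drop_drop)
  with assms show ?thesis
    by (metis transparent_append)
qed

lemma Ftab_append_rows:
  assumes "transparent i (rev P) (rev T)"
  shows "Ftab i (append_rows P T) = map_option (append_rows P) (Ftab i T)"
proof -
  have len: "length P = length T"
    using assms by (simp add: transparent_def)
  have "rev (append_rows (rev P) R') = append_rows P (rev R')" if "length R' = length T" for R'
    using that len by (simp add: rev_append_rows)
  with assms len show ?thesis
    by (auto simp: Ftab_eq_lower_rows rev_append_rows transparent_def option.map_comp
        dest: length_lower_rows intro!: option.map_cong)
qed

definition column_block :: "nat \<Rightarrow> nat \<Rightarrow> nat list list" where
  "column_block t l = map (\<lambda>j. replicate t (Suc j)) [0..<l]"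

definition add_columns :: "nat \<Rightarrow> nat list list \<Rightarrow> nat list list" where
  "add_columns t T = append_rows (column_block t (length T)) T"

lemma length_column_block [simp]: "length (column_block t l) = l"
  by (simp add: column_block_def)

lemma length_add_columns [simp]: "length (add_columns t T) = length T"
  by (simp add: add_columns_def)

lemma nth_add_columns: "k < length T \<Longrightarrow> add_columns t T ! k = replicate t (Suc k) @ T ! k"
  by (simp add: add_columns_def nth_append_rows column_block_def)

lemma map_drop_add_columns: "map (drop t) (add_columns t T) = T"
  by (intro nth_equalityI) (simp_all add: nth_add_columns)

lemma add_columns_inject: "add_columns t S = add_columns t T \<longleftrightarrow> S = T"
  by (metis map_drop_add_columns)

lemma add_columns_snoc:
  "add_columns t (T @ [r]) = add_columns t T @ [replicate t (Suc (length T)) @ r]"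
  by (simp add: add_columns_def column_block_def append_rows_append)

lemma rev_column_block: "rev (column_block t l) = map (\<lambda>j. replicate t (l - j)) [0..<l]"
  by (intro nth_equalityI) (simp_all add: column_block_def rev_nth Suc_diff_Suc)

lemma transparent_column_block:
  assumes T: "ssyt n \<nu> T" and \<nu>: "is_partition \<nu>" and i: "0 < i" "i \<noteq> length T"
  shows "transparent i (rev (column_block t (length T))) (rev T)"
proof (cases "length T < i")
  case True
  then show ?thesis
    by (intro transparent_neutral) (auto simp: column_block_def)
next
  case False
  define l where "l = length T"
  define a where "a = l - Suc i"
  let ?P = "map (\<lambda>j. replicate t (l - j)) [0..<l]"
  have l: "Suc a < l" "l - a = Suc i" "l - Suc a = i" "l - Suc (Suc a) = i - 1"
    using False i by (auto simp: a_def l_def)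
  have front: "transparent i (take a ?P) (take a (rev T))"
    using l by (intro transparent_neutral) (auto simp: l_def take_map)
  have rear: "transparent i (drop (a + 2) ?P) (drop (a + 2) (rev T))"
    using l by (intro transparent_neutral) (auto simp: l_def drop_map)
  have "take 2 (drop a ?P) = [replicate t (Suc i), replicate t i]"
    "take 2 (drop a (rev T)) = [T ! i, T ! (i - 1)]"
    using l by (simp_all add: take_2_drop rev_nth l_def)
  moreover have "i \<notin> set (T ! i)"
    using notin_row_ssyt[OF \<nu> T] l by (simp add: l_def)
  ultimately have middle: "transparent i (take 2 (drop a ?P)) (take 2 (drop a (rev T)))"
    by (simp add: transparent_matched_pair)
  from transparent_take_drop[OF front middle rear] show ?thesis
    by (simp add: rev_column_block l_def)
qed

lemma lower_rows_replicate_prefix: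
  assumes "transparent i P R"
  shows "lower_rows i ((replicate t i @ r) # append_rows P R) 0 =
           (case lower_rows i (r # R) 0 of
              Some R' \<Rightarrow> Some (append_rows (replicate t i # P) R')
            | None \<Rightarrow> if 0 < t then Some ((replicate (t - 1) i @ Suc i # r) # append_rows P R) else None)"
  using assms
  by (auto simp: transparent_def open_after_append open_after_replicate lower_word_append
      lower_word_replicate option.map_comp o_def split: option.splits)

text \<open>The new letters \<open>Suc k\<close> of the bottom row are read first and therefore stay
  unmatched.\<close>

lemma Ftab_add_columns_snoc:
  assumes "length T = k"
  shows "Ftab (Suc k) (add_columns t (T @ [r])) =
           (case Ftab (Suc k) (T @ [r]) of
              Some T' \<Rightarrow> Some (add_columns t T')
            | None \<Rightarrow> if 0 < t then Some (add_columns t T @ [replicate (t - 1) (Suc k) @ Suc (Suc k) # r])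
                      else None)"
proof -
  have transp: "transparent (Suc k) (rev (column_block t k)) (rev T)"
    using assms by (intro transparent_neutral) (auto simp: column_block_def)
  have rev_add: "rev (add_columns t T) = append_rows (rev (column_block t k)) (rev T)"
    using assms by (simp add: add_columns_def rev_append_rows)
  then have "rev (add_columns t (T @ [r])) = (replicate t (Suc k) @ r) # append_rows (rev (column_block t k)) (rev T)"
    using assms by (simp add: add_columns_snoc)
  then have lower: "lower_rows (Suc k) (rev (add_columns t (T @ [r]))) 0 =
           (case lower_rows (Suc k) (r # rev T) 0 of
              Some R' \<Rightarrow> Some (append_rows (replicate t (Suc k) # rev (column_block t k)) R')
            | None \<Rightarrow> if 0 < t then Some ((replicate (t - 1) (Suc k) @ Suc (Suc k) # r) # rev (add_columns t T))
                      else None)"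
    by (simp only: lower_rows_replicate_prefix[OF transp] rev_add)
  have "rev (append_rows (replicate t (Suc k) # rev (column_block t k)) R') = add_columns t (rev R')"
    if "length R' = Suc k" for R'
    using that assms
    by (simp add: add_columns_def rev_append_rows column_block_def)
  moreover have "length R' = Suc k" if "lower_rows (Suc k) (r # rev T) 0 = Some R'" for R'
    using length_lower_rows[OF that] assms by simp
  ultimately show ?thesis
    using lower by (auto simp: Ftab_eq_lower_rows simp del: lower_rows.simps split: option.splits)
qed

lemma add_columns_snoc_ne:
  assumes "0 < t" "length T = k"
  shows "add_columns t T @ [replicate (t - 1) (Suc k) @ Suc (Suc k) # r] \<noteq> add_columns t T'"
proof
  assume eq: "add_columns t T @ [replicate (t - 1) (Suc k) @ Suc (Suc k) # r] = add_columns t T'"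
  then have "length T' = Suc k"
    using assms(2) by (metis length_add_columns length_append_singleton)
  then obtain T0 r' where T': "T' = T0 @ [r']" "length T0 = k"
    by (cases T' rule: rev_cases) auto
  with eq have "replicate (t - 1) (Suc k) @ Suc (Suc k) # r = replicate t (Suc k) @ r'"
    by (simp add: add_columns_snoc)
  then have "(replicate (t - 1) (Suc k) @ Suc (Suc k) # r) ! (t - 1) = (replicate t (Suc k) @ r') ! (t - 1)"
    by simp
  with assms(1) show False
    by (simp add: nth_append)
qed

lemma Ftab_add_columns_eq_Some_iff:
  assumes T: "ssyt n \<nu> T" and \<nu>: "is_partition \<nu>" and "0 < i"
  shows "Ftab i (add_columns t T) = Some (add_columns t T') \<longleftrightarrow> Ftab i T = Some T'"
proof (cases "i = length T")
  case False
  have "Ftab i (add_columns t T) = map_option (append_rows (column_block t (length T))) (Ftab i T)"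
    unfolding add_columns_def using transparent_column_block[OF T \<nu> \<open>0 < i\<close> False]
    by (rule Ftab_append_rows)
  also have "\<dots> = map_option (add_columns t) (Ftab i T)"
    by (auto simp: add_columns_def dest: length_Ftab intro!: option.map_cong)
  finally show ?thesis
    by (auto simp: add_columns_inject)
next
  case True
  with \<open>0 < i\<close> obtain T0 r where T0: "T = T0 @ [r]" "i = Suc (length T0)"
    by (cases T rule: rev_cases) auto
  then show ?thesis
    using Ftab_add_columns_snoc[of T0 "length T0" t r] add_columns_snoc_ne[of t T0 "length T0" r T']
    by (auto simp: add_columns_inject split: option.splits)
qed

lemma ssyt_add_columns:
  assumes T: "ssyt n \<nu> T" and \<nu>: "is_partition \<nu>" and len: "length \<nu> \<le> n"
  shows "ssyt n (map (\<lambda>x. x + t) \<nu>) (add_columns t T)"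
  unfolding ssyt_def
proof (intro conjI ballI allI impI)
  have lengths: "length T = length \<nu>" "\<And>k. k < length T \<Longrightarrow> length (T ! k) = \<nu> ! k"
    using T by (simp_all add: length_ssyt length_row_ssyt)
  show "map length (add_columns t T) = map (\<lambda>x. x + t) \<nu>"
    using lengths by (intro nth_equalityI) (auto simp: nth_add_columns)
  fix row assume "row \<in> set (add_columns t T)"
  then obtain k where k: "k < length T" "row = replicate t (Suc k) @ T ! k"
    by (auto simp: in_set_conv_nth nth_add_columns)
  have "\<forall>x\<in>set (T ! k). Suc k \<le> x"
    using ssyt_entry_ge[OF \<nu> T k(1)] by (auto simp: in_set_conv_nth)
  then show "sorted row"
    using T k unfolding ssyt_def by (auto simp: sorted_append)
  have "T ! k \<in> set T"
    using k by simp
  moreover have "Suc k \<le> n"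
    using k lengths len by simp
  moreover fix x assume "x \<in> set row"
  ultimately show "1 \<le> x" "x \<le> n + 1"
    using T k unfolding ssyt_def by auto
next
  fix r c assume rc: "Suc r < length (add_columns t T)" "c < length (add_columns t T ! Suc r)"
  show "add_columns t T ! r ! c < add_columns t T ! Suc r ! c"
  proof (cases "c < t")
    case True
    then show ?thesis
      using rc by (simp add: nth_add_columns nth_append)
  next
    case False
    then have "T ! r ! (c - t) < T ! Suc r ! (c - t)"
      using T rc unfolding ssyt_def by (simp add: nth_add_columns)
    then show ?thesis
      using rc False by (simp add: nth_add_columns nth_append)
  qed
qed

lemma ssyt_drop_columns:
  assumes S: "ssyt n (map (\<lambda>x. x + t) \<nu>) S"
  shows "ssyt n \<nu> (map (drop t) S)"
  unfolding ssyt_def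
proof (intro conjI ballI allI impI)
  show "map length (map (drop t) S) = \<nu>"
    using S by (intro nth_equalityI) (simp_all add: length_ssyt length_row_ssyt)
  fix row assume "row \<in> set (map (drop t) S)"
  then obtain row' where row': "row' \<in> set S" "row = drop t row'"
    by auto
  then show "sorted row"
    using S unfolding ssyt_def by (simp add: sorted_wrt_drop)
  fix x assume "x \<in> set row"
  with row' show "1 \<le> x" "x \<le> n + 1"
    using S unfolding ssyt_def by (auto dest: in_set_dropD)
next
  fix r c assume rc: "Suc r < length (map (drop t) S)" "c < length (map (drop t) S ! Suc r)"
  then have "S ! r ! (t + c) < S ! Suc r ! (t + c)"
    using S unfolding ssyt_def by simp
  moreover have "t \<le> length (S ! r)"
    using S rc by (simp add: length_row_ssyt length_ssyt)
  ultimately show "map (drop t) S ! r ! c < map (drop t) S ! Suc r ! c"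
    using rc by simp
qed

lemma add_columns_drop_columns:
  assumes "\<And>k. k < length S \<Longrightarrow> take t (S ! k) = replicate t (Suc k)"
  shows "add_columns t (map (drop t) S) = S"
proof (rule nth_equalityI)
  fix k assume "k < length (add_columns t (map (drop t) S))"
  then show "add_columns t (map (drop t) S) ! k = S ! k"
    using assms[of k] by (simp add: nth_add_columns) (metis append_take_drop_id)
qed simp

lemma Ftab_eq_add_columnsD:
  assumes S: "ssyt n (map (\<lambda>x. x + t) \<nu>) S" and Y: "length Y = length \<nu>" and "0 < i"
    and F: "Ftab i S = Some (add_columns t Y)"
  shows "S = add_columns t (map (drop t) S)"
proof -
  obtain r p s where r: "r < length S" and row: "S ! r = p @ i # s"
    and S': "add_columns t Y = S[r := p @ Suc i # s]"
    using Ftab_SomeD[OF F] by blast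
  have lengths: "length S = length Y"
    using S Y by (simp add: length_ssyt)
  have other: "S ! k = replicate t (Suc k) @ Y ! k" if "k < length S" "k \<noteq> r" for k
    using S' that lengths by (metis nth_add_columns nth_list_update_neq)
  have new: "replicate t (Suc r) @ Y ! r = p @ Suc i # s"
    using S' r lengths by (metis nth_add_columns nth_list_update_eq)
  \<comment> \<open>a raised entry in the new columns would equal the entry above it\<close>
  have "t \<le> length p"
  proof (rule ccontr)
    assume "\<not> t \<le> length p"
    then have "(replicate t (Suc r) @ Y ! r) ! length p = Suc r"
      by (simp add: nth_append)
    then have "r = i"
      using new by simp
    with \<open>0 < i\<close> have "S ! (r - 1) ! length p = r"
      using other[of "r - 1"] r \<open>\<not> t \<le> length p\<close> by (simp add: nth_append)
    moreover have "S ! (r - 1) ! length p < S ! r ! length p"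
    proof -
      have "\<forall>k c. Suc k < length S \<longrightarrow> c < length (S ! Suc k) \<longrightarrow> S ! k ! c < S ! Suc k ! c"
        using S unfolding ssyt_def by blast
      from spec[OF spec[OF this, of "r - 1"], of "length p"] show ?thesis
        using r row \<open>r = i\<close> \<open>0 < i\<close> by simp
    qed
    ultimately show False
      using row \<open>r = i\<close> \<open>0 < i\<close> by simp
  qed
  then have "take t (S ! k) = replicate t (Suc k)" if "k < length S" for k
    using that other new row by (cases "k = r") (auto dest: arg_cong[where f = "take t"])
  then show ?thesis
    by (simp add: add_columns_drop_columns)
qed

lemma rtrancl_Bstep_add_columns:
  assumes \<nu>: "is_partition \<nu>" and len: "length \<nu> \<le> n"
  shows "(S, T) \<in> (Bstep n \<nu>)\<^sup>* \<Longrightarrow>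
           (add_columns t S, add_columns t T) \<in> (Bstep n (map (\<lambda>x. x + t) \<nu>))\<^sup>*"
proof (induction rule: rtrancl_induct)
  case (step T T')
  then obtain i where T: "ssyt n \<nu> T" and i: "i \<in> {1..n}" "Ftab i T = Some T'"
    by (auto simp: Bstep_def Btab_def)
  then have "(add_columns t T, add_columns t T') \<in> Bstep n (map (\<lambda>x. x + t) \<nu>)"
    using Ftab_add_columns_eq_Some_iff[OF T \<nu>] ssyt_add_columns[OF T \<nu> len]
    by (auto simp: Bstep_def Btab_def)
  with step.IH show ?case by simp
qed simp

lemma rtrancl_Bstep_add_columnsD:
  assumes \<nu>: "is_partition \<nu>" and T: "T \<in> Btab n \<nu>"
    and "(X, add_columns t T) \<in> (Bstep n (map (\<lambda>x. x + t) \<nu>))\<^sup>*"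
  shows "\<exists>S\<in>Btab n \<nu>. X = add_columns t S \<and> (S, T) \<in> (Bstep n \<nu>)\<^sup>*"
  using assms(3)
proof (induction rule: converse_rtrancl_induct)
  case base
  then show ?case using T by blast
next
  case (step X X')
  then obtain S' where S': "S' \<in> Btab n \<nu>" "X' = add_columns t S'" "(S', T) \<in> (Bstep n \<nu>)\<^sup>*"
    by blast
  from step.hyps(1) obtain i where X: "ssyt n (map (\<lambda>x. x + t) \<nu>) X" and i: "i \<in> {1..n}" "Ftab i X = Some X'"
    by (auto simp: Bstep_def Btab_def)
  define S where "S = map (drop t) X"
  have "length S' = length \<nu>"
    using S' by (simp add: Btab_def length_ssyt)
  moreover have "0 < i"
    using i by simp
  ultimately have X_eq: "X = add_columns t S"
    using Ftab_eq_add_columnsD[OF X] S' i by (simp add: S_def)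
  have S: "ssyt n \<nu> S"
    using ssyt_drop_columns[OF X] by (simp add: S_def)
  with X_eq S' i have "Ftab i S = Some S'"
    using Ftab_add_columns_eq_Some_iff[OF S \<nu>] by simp
  with S i have "(S, S') \<in> Bstep n \<nu>"
    by (auto simp: Bstep_def Btab_def)
  with S S' X_eq show ?case
    by (auto simp: Btab_def intro: converse_rtrancl_into_rtrancl)
qed

lemma add_columns_Btab:
  "is_partition \<nu> \<Longrightarrow> length \<nu> \<le> n \<Longrightarrow> S \<in> Btab n \<nu> \<Longrightarrow> add_columns t S \<in> Btab n (map (\<lambda>x. x + t) \<nu>)"
  by (simp add: Btab_def ssyt_add_columns)

lemma Ble_add_columns_iff:
  assumes \<nu>: "is_partition \<nu>" and len: "length \<nu> \<le> n" and S: "S \<in> Btab n \<nu>" and T: "T \<in> Btab n \<nu>"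
  shows "Ble n (map (\<lambda>x. x + t) \<nu>) (add_columns t S) (add_columns t T) \<longleftrightarrow> Ble n \<nu> S T"
proof
  assume "Ble n (map (\<lambda>x. x + t) \<nu>) (add_columns t S) (add_columns t T)"
  then show "Ble n \<nu> S T"
    using rtrancl_Bstep_add_columnsD[OF \<nu> T, of "add_columns t S" t] S T
    by (auto simp: Ble_def add_columns_inject)
next
  assume "Ble n \<nu> S T"
  then show "Ble n (map (\<lambda>x. x + t) \<nu>) (add_columns t S) (add_columns t T)"
    using rtrancl_Bstep_add_columns[OF \<nu> len] add_columns_Btab[OF \<nu> len] by (simp add: Ble_def)
qed

lemma add_columns_principal_ideal_iso:
  fixes t :: nat
  assumes \<nu>: "is_partition \<nu>" and len: "length \<nu> \<le> n"
  defines "lam \<equiv> map (\<lambda>x. x + t) \<nu>"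
  shows "order_iso_onto (add_columns t) (Btab n \<nu>) (Ble n \<nu>)
           (principal_ideal (Btab n lam) (Ble n lam) (add_columns t (lowest_tableau n \<nu>))) (Ble n lam)"
proof -
  let ?M = "lowest_tableau n \<nu>"
  have M: "?M \<in> Btab n \<nu>"
    using ssyt_lowest_tableau[OF \<nu> len] by (simp add: Btab_def)
  have "add_columns t ` Btab n \<nu> = principal_ideal (Btab n lam) (Ble n lam) (add_columns t ?M)"
  proof (intro set_eqI iffI)
    fix X assume "X \<in> add_columns t ` Btab n \<nu>"
    then obtain S where "S \<in> Btab n \<nu>" "X = add_columns t S"
      by blast
    then show "X \<in> principal_ideal (Btab n lam) (Ble n lam) (add_columns t ?M)"
      using Ble_lowest_tableau[OF \<nu> len] Ble_add_columns_iff[OF \<nu> len] add_columns_Btab[OF \<nu> len] M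
      by (simp add: principal_ideal_def lam_def)
  next
    fix X assume "X \<in> principal_ideal (Btab n lam) (Ble n lam) (add_columns t ?M)"
    then have "(X, add_columns t ?M) \<in> (Bstep n (map (\<lambda>x. x + t) \<nu>))\<^sup>*"
      by (simp add: principal_ideal_def Ble_def lam_def)
    then show "X \<in> add_columns t ` Btab n \<nu>"
      using rtrancl_Bstep_add_columnsD[OF \<nu> M] by blast
  qed
  moreover have "inj_on (add_columns t) (Btab n \<nu>)"
    by (simp add: inj_on_def add_columns_inject)
  ultimately show ?thesis
    using Ble_add_columns_iff[OF \<nu> len]
    by (simp add: order_iso_onto_def bij_betw_def lam_def)
qed

section \<open>Principal ideals of lattices\<close>

lemma is_lattice_principal_ideal:
  assumes lat: "is_lattice A le" and trans: "transp_on A le" and T: "T \<in> A"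
  shows "is_lattice (principal_ideal A le T) le"
  unfolding is_lattice_def
proof (intro ballI conjI)
  let ?I = "principal_ideal A le T"
  fix x y assume "x \<in> ?I" "y \<in> ?I"
  then have xy: "x \<in> A" "y \<in> A" "le x T" "le y T"
    by (simp_all add: principal_ideal_def)
  note bounds = lat[unfolded is_lattice_def, rule_format, OF xy(1,2)]
  obtain z where z: "z \<in> A" "le x z" "le y z" "\<forall>w\<in>A. le x w \<and> le y w \<longrightarrow> le z w"
    using bounds by blast
  obtain m where m: "m \<in> A" "le m x" "le m y" "\<forall>w\<in>A. le w x \<and> le w y \<longrightarrow> le w m"
    using bounds by blast
  have "le z T"
    using z xy T by blast
  moreover have "le m T"
    using m xy T transp_onD[OF trans] by blast
  ultimately show "\<exists>z\<in>?I. le x z \<and> le y z \<and> (\<forall>w\<in>?I. le x w \<and> le y w \<longrightarrow> le z w)"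
    "\<exists>z\<in>?I. le z x \<and> le z y \<and> (\<forall>w\<in>?I. le w x \<and> le w y \<longrightarrow> le w z)"
    using z m by (auto simp: principal_ideal_def)
qed

lemma is_lattice_order_iso:
  assumes iso: "order_iso_onto f A leA B leB" and lat: "is_lattice B leB"
  shows "is_lattice A leA"
  unfolding is_lattice_def
proof (intro ballI conjI)
  have image: "f ` A = B" and ord: "\<And>x y. x \<in> A \<Longrightarrow> y \<in> A \<Longrightarrow> leA x y \<longleftrightarrow> leB (f x) (f y)"
    using iso by (auto simp: order_iso_onto_def bij_betw_def)
  fix x y assume xy: "x \<in> A" "y \<in> A"
  then have "f x \<in> B" "f y \<in> B"
    using image by auto
  note bounds = lat[unfolded is_lattice_def, rule_format, OF this]
  obtain z where z: "z \<in> A" "leB (f x) (f z)" "leB (f y) (f z)"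
    "\<forall>w\<in>B. leB (f x) w \<and> leB (f y) w \<longrightarrow> leB (f z) w"
    using bounds image by blast
  obtain m where m: "m \<in> A" "leB (f m) (f x)" "leB (f m) (f y)"
    "\<forall>w\<in>B. leB w (f x) \<and> leB w (f y) \<longrightarrow> leB w (f m)"
    using bounds image by blast
  show "\<exists>z\<in>A. leA x z \<and> leA y z \<and> (\<forall>w\<in>A. leA x w \<and> leA y w \<longrightarrow> leA z w)"
    "\<exists>z\<in>A. leA z x \<and> leA z y \<and> (\<forall>w\<in>A. leA w x \<and> leA w y \<longrightarrow> leA w z)"
    using z m xy image by (auto simp: ord)
qed

lemma transp_on_Ble: "transp_on A (Ble N \<nu>)"
  by (auto simp: transp_on_def Ble_def)

theorem lemma5p2:
  fixes lam :: "nat list" and t n :: nat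
  assumes "is_partition lam" and "lam \<noteq> []"
    and "t < last lam"
    and "length lam \<le> n"
  defines "mu \<equiv> map (\<lambda>x. x - t) lam"
  shows "(\<exists>T\<in>Btab n lam. \<exists>f. order_iso_onto f (Btab n mu) (Ble n mu)
            (principal_ideal (Btab n lam) (Ble n lam) T) (Ble n lam))
       \<and> (\<not> is_lattice (Btab n mu) (Ble n mu) \<longrightarrow> \<not> is_lattice (Btab n lam) (Ble n lam))"
proof -
  have above_t: "\<forall>x\<in>set lam. t < x"
    using assms(1,3) partition_last_le by (metis order_less_le_trans)
  then have lam: "lam = map (\<lambda>x. x + t) mu"
    unfolding mu_def map_map by (intro map_idI[symmetric]) auto
  have mu: "is_partition mu" "length mu \<le> n"
    using assms(1,4) above_t by (simp_all add: mu_def partition_map_minus)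
  let ?T = "add_columns t (lowest_tableau n mu)"
  have T: "?T \<in> Btab n lam"
    using ssyt_add_columns[OF ssyt_lowest_tableau[OF mu] mu] by (simp add: Btab_def lam)
  have iso: "order_iso_onto (add_columns t) (Btab n mu) (Ble n mu)
               (principal_ideal (Btab n lam) (Ble n lam) ?T) (Ble n lam)"
    unfolding lam by (rule add_columns_principal_ideal_iso[OF mu])
  show ?thesis
    using T iso is_lattice_order_iso is_lattice_principal_ideal[OF _ transp_on_Ble T] by blast
qed

end
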